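(* Let $\mathcal H$ be a real Hilbert space, $t_0>0$, let $f:\mathcal H\to\mathbb R$ be convex and $\mathcal C^1$ with $L$-Lipschitz continuous gradient and nonempty set of minimizers. Let $\alpha>3$, $\gamma>0$, $\beta\ge0$, $\beta(t)=\gamma+\beta/t$, let $b\in]0,\alpha-1]$ and $$a(t)=t^2\left(1+\frac{(\alpha-b)\gamma t-\beta(\alpha+1-b)}{t^2-\alpha\gamma t-\beta(\alpha+1)}\right),\qquad m(t)=\max\big(t,\,L|a(t)\beta(t)|,\,L|a(t)|\beta(t)^2\big).$$ Let $e\in\mathcal C([t_0,+\infty[;\mathcal H)$ with $m(\cdot)e(\cdot)\in L^1(t_0,+\infty;\mathcal H)$, and let $x$ be a solution of $$\ddot x(t)+\frac\alpha t\dot x(t)+\nabla f\big(x(t)+\beta(t)\dot x(t)\big)+e(t)=0.$$ Then: (i) $f(x(t)+\beta(t)\dot x(t))-\min_{\mathcal H}f=\mathcal O(1/t^2)$ as $t\to+\infty$; (ii) $\|\dot x(t)\|=\mathcal O(1/t)$ as $t\to+\infty$; (iii) $\int_{t_0}^{+\infty}t\,(f(x(t))-\min_{\mathcal H}f)dt<+\infty$; (iv) $\int_{t_0}^{+\infty}t^2\|\nabla f(x(t)+\beta(t)\dot x(t))\|^2dt<+\infty$; (v) $\int_{t_0}^{+\infty}t\|\dot x(t)\|^2dt<+\infty$. *)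

theory Defs
  imports "HOL-Analysis.Analysis" "HOL-Library.Landau_Symbols"
begin

definition beta_fun :: "real \<Rightarrow> real \<Rightarrow> real \<Rightarrow> real" where
  "beta_fun \<gamma> \<beta> t = \<gamma> + \<beta> / t"

text \<open>a(t) as in the paper (division by zero yields 0 in HOL; only finitely many t).\<close>
definition a_fun :: "real \<Rightarrow> real \<Rightarrow> real \<Rightarrow> real \<Rightarrow> real \<Rightarrow> real" where
  "a_fun \<alpha> \<gamma> \<beta> b t =
     t^2 * (1 + ((\<alpha> - b) * \<gamma> * t - \<beta> * (\<alpha> + 1 - b)) /
                (t^2 - \<alpha> * \<gamma> * t - \<beta> * (\<alpha> + 1)))"

definition m_fun :: "real \<Rightarrow> real \<Rightarrow> real \<Rightarrow> real \<Rightarrow> real \<Rightarrow> real \<Rightarrow> real" where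
  "m_fun L \<alpha> \<gamma> \<beta> b t =
     max t (max (L * \<bar>a_fun \<alpha> \<gamma> \<beta> b t * beta_fun \<gamma> \<beta> t\<bar>)
                (L * \<bar>a_fun \<alpha> \<gamma> \<beta> b t\<bar> * (beta_fun \<gamma> \<beta> t)^2))"

end

theory Submission
  imports Defs "HOL-Real_Asymp.Real_Asymp"
begin

text \<open>With \<open>z = x + \<beta>(t) x'\<close>, a minimizer \<open>x\<^sup>*\<close>, \<open>\<theta> = (\<alpha> + 1) / 2\<close> and
  \<open>u = \<theta> (x - x\<^sup>*) + t x'\<close>, the energy
  \<open>E = A(t) (f(z) - min f) + \<parallel>u\<parallel>\<^sup>2 / 2 + \<theta> (\<alpha> - 1 - \<theta>) \<parallel>x - x\<^sup>*\<parallel>\<^sup>2 / 2\<close>, where \<open>A(t) \<sim> t\<^sup>2\<close> is the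
  rational function for which the cross terms \<open>\<langle>\<nabla>f(z), x'\<rangle>\<close> cancel, satisfies for large \<open>t\<close>
  \<open>E' + \<kappa> D \<le> K t \<parallel>e(t)\<parallel> \<surd>E\<close> with the dissipation
  \<open>D = t (f(z) - min f) + t\<^sup>2 \<parallel>\<nabla>f(z)\<parallel>\<^sup>2 + t \<parallel>x'\<parallel>\<^sup>2\<close>; convexity enters through
  \<open>f(z) - min f \<le> \<langle>\<nabla>f(z), z - x\<^sup>*\<rangle>\<close> and the Lipschitz gradient through
  \<open>\<parallel>\<nabla>f(z)\<parallel>\<^sup>2 \<le> 2 L (f(z) - min f)\<close>. As \<open>t \<parallel>e(t)\<parallel>\<close> is integrable, a Gronwall argument bounds \<open>E\<close>,
  which gives (i) and (ii), and then \<open>\<integral> D < \<infinity>\<close>, which gives (iv), (v) and, by convexity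
  once more, (iii).\<close>

section \<open>Smooth convex functions\<close>

lemma gradient_chain_rule:
  fixes f :: "'a::real_inner \<Rightarrow> real"
  assumes grad: "\<And>y. (f has_derivative (\<lambda>h. g y \<bullet> h)) (at y)"
    and z: "(z has_vector_derivative z') (at t within S)"
  shows "((\<lambda>s. f (z s)) has_real_derivative g (z t) \<bullet> z') (at t within S)"
proof -
  have "(f has_derivative (\<lambda>h. g (z t) \<bullet> h)) (at (z t) within z ` S)"
    using grad has_derivative_subset by blast
  from diff_chain_within[OF z[unfolded has_vector_derivative_def] this]
  show ?thesis
    unfolding has_field_derivative_def comp_def
    by (rule has_derivative_eq_rhs) (auto simp: fun_eq_iff)
qed

lemma norm_squared_has_real_derivative:
  assumes "(u has_vector_derivative u') (at t within S)"
  shows "((\<lambda>s. (norm (u s))\<^sup>2) has_real_derivative 2 * (u t \<bullet> u')) (at t within S)"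
proof -
  have "(u has_derivative (\<lambda>h. h *\<^sub>R u')) (at t within S)"
    using assms by (simp add: has_vector_derivative_def)
  from has_derivative_inner[OF this this] show ?thesis
    unfolding has_field_derivative_def power2_norm_eq_inner
    by (rule has_derivative_eq_rhs) (auto simp: fun_eq_iff inner_commute algebra_simps)
qed

lemma convex_gradient_inequality:
  fixes f :: "'a::real_inner \<Rightarrow> real"
  assumes convex: "convex_on UNIV f" and grad: "\<And>y. (f has_derivative (\<lambda>h. g y \<bullet> h)) (at y)"
  shows "f z + g z \<bullet> (y - z) \<le> f y"
proof -
  define \<phi> where "\<phi> s = f (z + s *\<^sub>R (y - z))" for s :: real
  have "convex_on UNIV \<phi>"
  proof (rule convex_onI)
    fix t a b :: real
    assume "0 < t" "t < 1"
    have "z + ((1 - t) *\<^sub>R a + t *\<^sub>R b) *\<^sub>R (y - z)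
        = (1 - t) *\<^sub>R (z + a *\<^sub>R (y - z)) + t *\<^sub>R (z + b *\<^sub>R (y - z))"
      by (simp add: algebra_simps)
    with convex_onD[OF convex, of t] \<open>0 < t\<close> \<open>t < 1\<close>
    show "\<phi> ((1 - t) *\<^sub>R a + t *\<^sub>R b) \<le> (1 - t) * \<phi> a + t * \<phi> b"
      unfolding \<phi>_def by simp
  qed simp
  moreover have "((\<lambda>s. z + s *\<^sub>R (y - z)) has_vector_derivative y - z) (at 0)"
    by (auto intro!: derivative_eq_intros simp: has_vector_derivative_def)
  then have "(\<phi> has_real_derivative g z \<bullet> (y - z)) (at 0 within UNIV)"
    using gradient_chain_rule[OF grad] unfolding \<phi>_def by fastforce
  ultimately have "(g z \<bullet> (y - z)) * (1 - 0) \<le> \<phi> 1 - \<phi> 0"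
    by (intro convex_on_imp_above_tangent) auto
  then show ?thesis
    unfolding \<phi>_def by simp
qed

lemma lipschitz_gradient_descent:
  fixes f :: "'a::real_inner \<Rightarrow> real"
  assumes grad: "\<And>y. (f has_derivative (\<lambda>h. g y \<bullet> h)) (at y)"
    and lipschitz: "\<And>y z. norm (g y - g z) \<le> L * norm (y - z)"
  shows "f (y + h) \<le> f y + g y \<bullet> h + L / 2 * (norm h)\<^sup>2"
proof -
  define \<phi> where "\<phi> s = f (y + s *\<^sub>R h) - s * (g y \<bullet> h) - L / 2 * s\<^sup>2 * (norm h)\<^sup>2" for s
  have "\<phi> 1 \<le> \<phi> 0"
  proof (rule DERIV_nonpos_imp_nonincreasing[of 0 1])
    fix s :: real
    assume s: "0 \<le> s" "s \<le> 1"
    have "((\<lambda>s. y + s *\<^sub>R h) has_vector_derivative h) (at s)"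
      by (auto intro!: derivative_eq_intros simp: has_vector_derivative_def)
    from gradient_chain_rule[OF grad this]
    have "(\<phi> has_real_derivative g (y + s *\<^sub>R h) \<bullet> h - g y \<bullet> h - L * s * (norm h)\<^sup>2) (at s)"
      unfolding \<phi>_def by (auto intro!: derivative_eq_intros)
    moreover have "(g (y + s *\<^sub>R h) - g y) \<bullet> h \<le> L * s * (norm h)\<^sup>2"
    proof -
      have "(g (y + s *\<^sub>R h) - g y) \<bullet> h \<le> norm (g (y + s *\<^sub>R h) - g y) * norm h"
        by (rule norm_cauchy_schwarz)
      also have "\<dots> \<le> L * norm (s *\<^sub>R h) * norm h"
        using lipschitz[of "y + s *\<^sub>R h" y] by (intro mult_right_mono) auto
      finally show ?thesis
        using s by (simp add: power2_eq_square mult.assoc)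
    qed
    ultimately show "\<exists>d. (\<phi> has_real_derivative d) (at s) \<and> d \<le> 0"
      by (auto simp: inner_diff_left)
  qed simp
  then show ?thesis
    unfolding \<phi>_def by simp
qed

lemma lipschitz_gradient_norm_bound:
  fixes f :: "'a::real_inner \<Rightarrow> real"
  assumes grad: "\<And>y. (f has_derivative (\<lambda>h. g y \<bullet> h)) (at y)"
    and lipschitz: "\<And>y z. norm (g y - g z) \<le> L * norm (y - z)"
    and "0 < L" and lower: "\<And>y. m \<le> f y"
  shows "(norm (g y))\<^sup>2 \<le> 2 * L * (f y - m)"
proof -
  have "m \<le> f (y + (- (1 / L)) *\<^sub>R g y)"
    by (rule lower)
  also have "\<dots> \<le> f y + g y \<bullet> ((- (1 / L)) *\<^sub>R g y) + L / 2 * (norm ((- (1 / L)) *\<^sub>R g y))\<^sup>2"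
    by (rule lipschitz_gradient_descent[OF grad lipschitz])
  also have "\<dots> = f y - (norm (g y))\<^sup>2 / (2 * L)"
    using \<open>0 < L\<close> by (simp add: power2_norm_eq_inner[symmetric] power_mult_distrib power2_eq_square field_simps)
  finally show ?thesis
    using \<open>0 < L\<close> by (simp add: field_simps)
qed

lemma convex_value_le_shifted:
  fixes f :: "'a::real_inner \<Rightarrow> real"
  assumes convex: "convex_on UNIV f" and grad: "\<And>y. (f has_derivative (\<lambda>h. g y \<bullet> h)) (at y)"
    and lipschitz: "\<And>y z. norm (g y - g z) \<le> L * norm (y - z)"
  shows "f y \<le> f (y + v) + norm (g (y + v)) * norm v + L * (norm v)\<^sup>2"
proof -
  have "f y + g y \<bullet> v \<le> f (y + v)"
    using convex_gradient_inequality[OF convex grad, of y "y + v"] by simp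
  moreover have "- (g y \<bullet> v) \<le> norm (g y) * norm v"
    using norm_cauchy_schwarz[of "- g y" v] by simp
  moreover have "norm (g y) * norm v \<le> (norm (g (y + v)) + L * norm v) * norm v"
    using norm_triangle_sub[of "g y" "g (y + v)"] lipschitz[of y "y + v"]
    by (intro mult_right_mono) auto
  ultimately show ?thesis
    by (simp add: algebra_simps power2_eq_square)
qed

section \<open>Integrals on half-lines and a Gronwall-type estimate\<close>

lemma indefinite_integral_has_real_derivative:
  fixes h :: "real \<Rightarrow> real"
  assumes "continuous_on {a..} h" "a < t"
  shows "((\<lambda>s. integral {a..s} h) has_real_derivative h t) (at t)"
proof -
  have "((\<lambda>s. integral {a..s} h) has_real_derivative h t) (at t within {a..t+1})"
    using assms by (intro integral_has_real_derivative) (auto intro: continuous_on_subset)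
  moreover have "at t within {a..t+1} = at t"
    using assms by (intro at_within_interior) auto
  ultimately show ?thesis
    by simp
qed

lemma increment_le_integral_of_derivative_bound:
  fixes \<phi> k :: "real \<Rightarrow> real"
  assumes deriv: "\<And>s. a \<le> s \<Longrightarrow> \<exists>d. (\<phi> has_real_derivative d) (at s) \<and> d \<le> k s"
    and k: "continuous_on {a..} k" and "a \<le> t"
  shows "\<phi> t - \<phi> a \<le> integral {a..t} k"
proof -
  define \<psi> where "\<psi> s = \<phi> s - integral {a..s} k" for s
  have "\<psi> t \<le> \<psi> a"
  proof (rule DERIV_nonpos_imp_decreasing_open[OF \<open>a \<le> t\<close>])
    fix s
    assume "a < s" "s < t"
    then obtain d where "(\<phi> has_real_derivative d) (at s)" "d \<le> k s"
      using deriv[of s] by auto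
    with DERIV_diff[OF this(1) indefinite_integral_has_real_derivative[OF k \<open>a < s\<close>]]
    show "\<exists>d. (\<psi> has_real_derivative d) (at s) \<and> d \<le> 0"
      unfolding \<psi>_def by force
  next
    have "continuous_on {a..t} \<phi>"
    proof (intro continuous_at_imp_continuous_on ballI)
      fix s
      assume "s \<in> {a..t}"
      then obtain d where "(\<phi> has_real_derivative d) (at s)"
        using deriv[of s] by auto
      then show "isCont \<phi> s"
        by (rule DERIV_isCont)
    qed
    moreover have "continuous_on {a..t} (\<lambda>s. integral {a..s} k)"
      using k by (intro indefinite_integral_continuous_1 integrable_continuous_interval)
        (auto intro: continuous_on_subset)
    ultimately show "continuous_on {a..t} \<psi>"
      unfolding \<psi>_def by (intro continuous_intros)
  qed
  then show ?thesis
    by (simp add: \<psi>_def)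
qed

text \<open>The bound comes from \<open>\<surd>(1 + E)\<close>, whose derivative is at most \<open>K h / 2\<close>.\<close>
lemma perturbed_energy_bounded:
  fixes E h :: "real \<Rightarrow> real"
  assumes deriv: "\<And>t. T \<le> t \<Longrightarrow> \<exists>E'. (E has_real_derivative E') (at t) \<and> E' \<le> K * h t * sqrt (E t)"
    and E_nonneg: "\<And>t. T \<le> t \<Longrightarrow> 0 \<le> E t" and h_nonneg: "\<And>t. T \<le> t \<Longrightarrow> 0 \<le> h t" and "0 \<le> K"
    and h_cont: "continuous_on {T..} h" and h_integral: "\<And>t. T \<le> t \<Longrightarrow> integral {T..t} h \<le> M"
    and "T \<le> t"
  shows "E t \<le> (sqrt (1 + E T) + K / 2 * M)\<^sup>2"
proof -
  have "sqrt (1 + E t) - sqrt (1 + E T) \<le> integral {T..t} (\<lambda>s. K / 2 * h s)"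
  proof (rule increment_le_integral_of_derivative_bound[OF _ _ \<open>T \<le> t\<close>])
    fix s
    assume "T \<le> s"
    then obtain E' where E': "(E has_real_derivative E') (at s)" "E' \<le> K * h s * sqrt (E s)"
      using deriv by blast
    have "K * h s * sqrt (E s) \<le> K * h s * sqrt (1 + E s)"
      using \<open>0 \<le> K\<close> h_nonneg[OF \<open>T \<le> s\<close>] by (intro mult_left_mono) auto
    with E'(2) have "E' \<le> K * h s * sqrt (1 + E s)"
      by linarith
    moreover have "0 < sqrt (1 + E s)"
      using E_nonneg[OF \<open>T \<le> s\<close>] by simp
    ultimately have "inverse (sqrt (1 + E s)) / 2 * E' \<le> K / 2 * h s"
      by (simp add: field_simps)
    moreover have "((\<lambda>s. sqrt (1 + E s)) has_real_derivative inverse (sqrt (1 + E s)) / 2 * E') (at s)"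
      using DERIV_chain2[OF DERIV_real_sqrt DERIV_add[OF DERIV_const E'(1)], of 1] E_nonneg[OF \<open>T \<le> s\<close>]
      by simp
    ultimately show "\<exists>d. ((\<lambda>s. sqrt (1 + E s)) has_real_derivative d) (at s) \<and> d \<le> K / 2 * h s"
      by blast
  qed (use h_cont in \<open>intro continuous_intros\<close>)
  also have "\<dots> \<le> K / 2 * M"
    using h_integral[OF \<open>T \<le> t\<close>] \<open>0 \<le> K\<close> by (simp add: mult_left_mono)
  finally have "sqrt (1 + E t) \<le> sqrt (1 + E T) + K / 2 * M"
    by simp
  then have "(sqrt (1 + E t))\<^sup>2 \<le> (sqrt (1 + E T) + K / 2 * M)\<^sup>2"
    using E_nonneg[OF \<open>T \<le> t\<close>] by (intro power_mono) auto
  then show ?thesis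
    using E_nonneg[OF \<open>T \<le> t\<close>] by simp
qed

lemma dissipation_integral_bounded:
  fixes E D h :: "real \<Rightarrow> real"
  assumes deriv: "\<And>t. T \<le> t \<Longrightarrow> \<exists>E'. (E has_real_derivative E') (at t) \<and> E' + D t \<le> K * h t * sqrt (E t)"
    and E_bounds: "\<And>t. T \<le> t \<Longrightarrow> 0 \<le> E t \<and> E t \<le> B"
    and h_nonneg: "\<And>t. T \<le> t \<Longrightarrow> 0 \<le> h t" and "0 \<le> K"
    and D_cont: "continuous_on {T..} D" and h_cont: "continuous_on {T..} h"
    and h_integral: "\<And>t. T \<le> t \<Longrightarrow> integral {T..t} h \<le> M"
    and "T \<le> t"
  shows "integral {T..t} D \<le> E T + K * sqrt B * M"
proof -
  have "E t - E T \<le> integral {T..t} (\<lambda>s. K * sqrt B * h s - D s)"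
  proof (rule increment_le_integral_of_derivative_bound[OF _ _ \<open>T \<le> t\<close>])
    fix s
    assume "T \<le> s"
    then obtain E' where E': "(E has_real_derivative E') (at s)" "E' + D s \<le> K * h s * sqrt (E s)"
      using deriv by blast
    have "K * h s * sqrt (E s) \<le> K * h s * sqrt B"
      using E_bounds[OF \<open>T \<le> s\<close>] \<open>0 \<le> K\<close> h_nonneg[OF \<open>T \<le> s\<close>]
      by (intro mult_left_mono real_sqrt_le_mono) auto
    with E' show "\<exists>d. (E has_real_derivative d) (at s) \<and> d \<le> K * sqrt B * h s - D s"
      by (intro exI[of _ E']) (auto simp: algebra_simps)
  qed (use h_cont D_cont in \<open>intro continuous_intros\<close>)
  also have "\<dots> = K * sqrt B * integral {T..t} h - integral {T..t} D"
  proof -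
    have "h integrable_on {T..t}"
      by (intro integrable_continuous_interval continuous_on_subset[OF h_cont]) auto
    moreover have "D integrable_on {T..t}"
      by (intro integrable_continuous_interval continuous_on_subset[OF D_cont]) auto
    ultimately show ?thesis
      using integrable_on_cmult_left[of h "{T..t}" "K * sqrt B"] by (simp add: integral_diff)
  qed
  moreover have "0 \<le> B"
    using E_bounds[of T] by simp
  then have "K * sqrt B * integral {T..t} h \<le> K * sqrt B * M"
    using h_integral[OF \<open>T \<le> t\<close>] \<open>0 \<le> K\<close> by (intro mult_left_mono) auto
  ultimately show ?thesis
    using E_bounds[OF \<open>T \<le> t\<close>] by linarith
qed

lemma perturbed_dissipative_energy_bounded:
  fixes E D h :: "real \<Rightarrow> real"
  assumes deriv: "\<And>t. T \<le> t \<Longrightarrow> \<exists>E'. (E has_real_derivative E') (at t) \<and> E' + D t \<le> K * h t * sqrt (E t)"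
    and E_nonneg: "\<And>t. T \<le> t \<Longrightarrow> 0 \<le> E t" and D_nonneg: "\<And>t. T \<le> t \<Longrightarrow> 0 \<le> D t"
    and h_nonneg: "\<And>t. T \<le> t \<Longrightarrow> 0 \<le> h t" and "0 \<le> K"
    and D_cont: "continuous_on {T..} D" and h_cont: "continuous_on {T..} h"
    and h_integral: "\<And>t. T \<le> t \<Longrightarrow> integral {T..t} h \<le> M"
  shows "\<exists>B. \<forall>t\<ge>T. E t \<le> B \<and> integral {T..t} D \<le> B"
proof -
  define B where "B = (sqrt (1 + E T) + K / 2 * M)\<^sup>2"
  have E_bound: "E t \<le> B" if "T \<le> t" for t
    unfolding B_def
  proof (rule perturbed_energy_bounded[OF _ E_nonneg h_nonneg \<open>0 \<le> K\<close> h_cont h_integral that])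
    show "\<exists>E'. (E has_real_derivative E') (at s) \<and> E' \<le> K * h s * sqrt (E s)" if "T \<le> s" for s
      using deriv[OF that] D_nonneg[OF that] by force
  qed
  have "integral {T..t} D \<le> E T + K * sqrt B * M" if "T \<le> t" for t
    using E_bound E_nonneg
    by (intro dissipation_integral_bounded[OF deriv _ h_nonneg \<open>0 \<le> K\<close> D_cont h_cont h_integral that]) auto
  with E_bound show ?thesis
    by (intro exI[of _ "max B (E T + K * sqrt B * M)"]) (auto simp: le_max_iff_disj)
qed

lemma nn_integral_Ici_finite_if_integrals_bounded:
  fixes h :: "real \<Rightarrow> real"
  assumes cont: "continuous_on {a..} h" and nonneg: "\<And>t. a \<le> t \<Longrightarrow> 0 \<le> h t"
    and bounded: "\<And>t. a \<le> t \<Longrightarrow> integral {a..t} h \<le> C"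
  shows "(\<integral>\<^sup>+ t\<in>{a..}. ennreal (h t) \<partial>lborel) < \<infinity>"
proof -
  define H where "H t = h (max t a)" for t
  have H_cont: "continuous_on UNIV H"
    unfolding H_def by (rule continuous_on_compose2[OF cont]) (auto intro!: continuous_intros)
  then have [measurable]: "H \<in> borel_measurable borel"
    by (rule borel_measurable_continuous_onI)
  have H_SUP: "ennreal (H t) * indicator {a..} t = (SUP n::nat. ennreal (H t) * indicator {a..a + real n} t)" for t
  proof (cases "a \<le> t")
    case True
    obtain n :: nat where "t - a \<le> real n"
      using real_arch_simple by blast
    with True show ?thesis
      by (intro antisym SUP_upper2[of n] SUP_least) (auto split: split_indicator)
  qed simp
  have "(\<integral>\<^sup>+ t\<in>{a..}. ennreal (h t) \<partial>lborel) = (\<integral>\<^sup>+ t\<in>{a..}. ennreal (H t) \<partial>lborel)"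
    by (rule nn_integral_cong) (auto simp: H_def split: split_indicator)
  also have "\<dots> = (SUP n::nat. (\<integral>\<^sup>+ t\<in>{a..a + real n}. ennreal (H t) \<partial>lborel))"
    unfolding H_SUP
    by (rule nn_integral_monotone_convergence_SUP) (auto simp: incseq_def le_fun_def split: split_indicator)
  also have "\<dots> \<le> ennreal C"
  proof (rule SUP_least)
    fix n :: nat
    have H_integral: "(H has_integral integral {a..a + real n} H) {a..a + real n}"
        by (intro integrable_integral integrable_continuous_interval continuous_on_subset[OF H_cont]) auto
    have "(\<integral>\<^sup>+ t\<in>{a..a + real n}. ennreal (H t) \<partial>lborel) = ennreal (integral {a..a + real n} H)"
      by (rule nn_integral_has_integral_lebesgue'[OF _ H_integral]) (auto simp: H_def nonneg)
    also have "integral {a..a + real n} H = integral {a..a + real n} h"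
      by (rule integral_cong) (auto simp: H_def)
    finally show "(\<integral>\<^sup>+ t\<in>{a..a + real n}. ennreal (H t) \<partial>lborel) \<le> ennreal C"
      using bounded[of "a + real n"] by (simp add: ennreal_leI)
  qed
  finally show ?thesis
    by (simp add: le_less_trans)
qed

lemma integral_le_nn_integral_Ici:
  fixes h :: "real \<Rightarrow> real"
  assumes cont: "continuous_on {a..} h" and nonneg: "\<And>t. a \<le> t \<Longrightarrow> 0 \<le> h t"
    and fin: "(\<integral>\<^sup>+ t\<in>{a..}. ennreal (h t) \<partial>lborel) < \<infinity>" and "a \<le> s"
  shows "integral {s..t} h \<le> enn2real (\<integral>\<^sup>+ t\<in>{a..}. ennreal (h t) \<partial>lborel)"
proof -
  have h_integral: "(h has_integral integral {s..t} h) {s..t}"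
    using \<open>a \<le> s\<close> by (intro integrable_integral integrable_continuous_interval continuous_on_subset[OF cont]) auto
  have "ennreal (integral {s..t} h) = (\<integral>\<^sup>+ r\<in>{s..t}. ennreal (h r) \<partial>lborel)"
    by (rule nn_integral_has_integral_lebesgue'[OF _ h_integral, symmetric]) (use \<open>a \<le> s\<close> nonneg in auto)
  also have "\<dots> \<le> (\<integral>\<^sup>+ r\<in>{a..}. ennreal (h r) \<partial>lborel)"
    by (intro nn_integral_mono) (use \<open>a \<le> s\<close> in \<open>auto split: split_indicator\<close>)
  finally have "enn2real (ennreal (integral {s..t} h)) \<le> enn2real (\<integral>\<^sup>+ r\<in>{a..}. ennreal (h r) \<partial>lborel)"
    using fin by (intro enn2real_mono) auto
  moreover have "0 \<le> integral {s..t} h"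
    by (rule has_integral_nonneg[OF h_integral]) (use \<open>a \<le> s\<close> nonneg in auto)
  ultimately show ?thesis
    by simp
qed

lemma nn_integral_Ici_finite_if_dominated:
  fixes q D :: "real \<Rightarrow> real"
  assumes q_cont: "continuous_on {a..} q" and q_nonneg: "\<And>t. a \<le> t \<Longrightarrow> 0 \<le> q t"
    and "a \<le> T" and D_cont: "continuous_on {T..} D"
    and dominated: "\<And>t. T \<le> t \<Longrightarrow> q t \<le> K * D t" and "0 \<le> K"
    and D_integral: "\<And>t. T \<le> t \<Longrightarrow> integral {T..t} D \<le> C"
  shows "(\<integral>\<^sup>+ t\<in>{a..}. ennreal (q t) \<partial>lborel) < \<infinity>"
proof (rule nn_integral_Ici_finite_if_integrals_bounded[OF q_cont q_nonneg])
  have q_integrable: "q integrable_on {s..t}" if "a \<le> s" for s t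
    using that by (intro integrable_continuous_interval continuous_on_subset[OF q_cont]) auto
  fix t
  assume "a \<le> t"
  show "integral {a..t} q \<le> integral {a..T} q + K * C"
  proof (cases "t \<le> T")
    case True
    then have "integral {a..t} q \<le> integral {a..T} q"
      using \<open>a \<le> t\<close> q_nonneg q_integrable by (intro integral_subset_le) auto
    moreover have "0 \<le> C"
      using D_integral[of T] by simp
    ultimately show ?thesis
      using \<open>0 \<le> K\<close> by (simp add: add_increasing2)
  next
    case False
    have "(\<lambda>s. K * D s) integrable_on {T..t}"
      by (intro integrable_continuous_interval continuous_intros continuous_on_subset[OF D_cont]) auto
    then have "integral {T..t} q \<le> integral {T..t} (\<lambda>s. K * D s)"
      using \<open>a \<le> T\<close> q_integrable dominated by (intro integral_le) auto
    also have "\<dots> \<le> K * C"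
      using D_integral[of t] False \<open>0 \<le> K\<close> by (simp add: mult_left_mono)
    moreover have "integral {a..T} q + integral {T..t} q = integral {a..t} q"
      using False \<open>a \<le> T\<close> q_integrable by (intro Henstock_Kurzweil_Integration.integral_combine) auto
    ultimately show ?thesis
      by linarith
  qed
qed

section \<open>The energy coefficient\<close>

lemma beta_fun_bounds:
  assumes "0 \<le> \<beta>" "1 \<le> t"
  shows "\<gamma> \<le> beta_fun \<gamma> \<beta> t" "beta_fun \<gamma> \<beta> t \<le> \<gamma> + \<beta>"
  using assms frac_le[of \<beta> \<beta> 1 t] by (auto simp: beta_fun_def)

text \<open>The friction identity below makes the
  terms \<open>\<langle>\<nabla>f(x + \<beta>(t) x'), x'\<rangle>\<close> cancel in the derivative of the energy.\<close>
definition energy_coeff :: "real \<Rightarrow> real \<Rightarrow> real \<Rightarrow> real \<Rightarrow> real \<Rightarrow> real" where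
  "energy_coeff \<alpha> \<gamma> \<beta> c t = t\<^sup>2 * (t\<^sup>2 - c * \<gamma> * t - c * \<beta>) / (t\<^sup>2 - \<alpha> * \<gamma> * t - (\<alpha> + 1) * \<beta>)"

lemma eventually_energy_coeff_friction_identity:
  "eventually (\<lambda>t. energy_coeff \<alpha> \<gamma> \<beta> c t * (1 - \<alpha> * beta_fun \<gamma> \<beta> t / t - \<beta> / t\<^sup>2)
     = t\<^sup>2 - c * t * beta_fun \<gamma> \<beta> t) at_top"
proof -
  have "eventually (\<lambda>t. 0 < t \<and> 0 < t\<^sup>2 - \<alpha> * \<gamma> * t - (\<alpha> + 1) * \<beta>) at_top"
    by (intro eventually_conj; real_asymp)
  then show ?thesis
  proof eventually_elim
    case (elim t)
    then have "1 - \<alpha> * beta_fun \<gamma> \<beta> t / t - \<beta> / t\<^sup>2 = (t\<^sup>2 - \<alpha> * \<gamma> * t - (\<alpha> + 1) * \<beta>) / t\<^sup>2"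
      by (simp add: beta_fun_def field_simps power2_eq_square)
    moreover have "energy_coeff \<alpha> \<gamma> \<beta> c t * ((t\<^sup>2 - \<alpha> * \<gamma> * t - (\<alpha> + 1) * \<beta>) / t\<^sup>2)
        = t\<^sup>2 - c * \<gamma> * t - c * \<beta>"
      using elim by (simp add: energy_coeff_def)
    moreover have "t\<^sup>2 - c * t * beta_fun \<gamma> \<beta> t = t\<^sup>2 - c * \<gamma> * t - c * \<beta>"
      using elim by (simp add: beta_fun_def algebra_simps)
    ultimately show ?case
      by simp
  qed
qed

lemma eventually_energy_coeff_bounds:
  "eventually (\<lambda>t. t\<^sup>2 / 2 \<le> energy_coeff \<alpha> \<gamma> \<beta> c t \<and> energy_coeff \<alpha> \<gamma> \<beta> c t \<le> 2 * t\<^sup>2) at_top"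
  unfolding energy_coeff_def by (intro eventually_conj; real_asymp)

lemma eventually_energy_coeff_derivative_bound:
  assumes "2 < c"
  shows "eventually (\<lambda>t. \<exists>A'. (energy_coeff \<alpha> \<gamma> \<beta> c has_real_derivative A') (at t) \<and> A' \<le> (c + 2) / 2 * t) at_top"
proof -
  define P where "P t = t\<^sup>2 - \<alpha> * \<gamma> * t - (\<alpha> + 1) * \<beta>" for t
  define Q where "Q t = t\<^sup>2 - c * \<gamma> * t - c * \<beta>" for t
  define A' where "A' t = ((2 * t * Q t + t\<^sup>2 * (2 * t - c * \<gamma>)) * P t - t\<^sup>2 * Q t * (2 * t - \<alpha> * \<gamma>)) / (P t)\<^sup>2" for t
  have "eventually (\<lambda>t. 0 < P t \<and> A' t \<le> (c + 2) / 2 * t) at_top"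
    unfolding A'_def P_def Q_def using assms by (intro eventually_conj; real_asymp)
  then show ?thesis
  proof eventually_elim
    case (elim t)
    have "(energy_coeff \<alpha> \<gamma> \<beta> c has_real_derivative A' t) (at t)"
      unfolding energy_coeff_def[abs_def] A'_def
      using elim by (auto intro!: derivative_eq_intros simp: P_def Q_def power2_eq_square algebra_simps)
    with elim show ?case
      by blast
  qed
qed

section \<open>The Lyapunov energy of the perturbed dynamics\<close>

locale perturbed_inertial_dynamics =
  fixes f :: "'a::real_inner \<Rightarrow> real" and g :: "'a \<Rightarrow> 'a" and L :: real
    and x x' x'' e :: "real \<Rightarrow> 'a" and t0 \<alpha> \<gamma> \<beta> :: real and xmin :: 'a
  assumes t0_pos: "0 < t0"
    and f_convex: "convex_on UNIV f"
    and f_grad: "\<And>y. (f has_derivative (\<lambda>h. g y \<bullet> h)) (at y)"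
    and g_lipschitz: "\<And>y z. norm (g y - g z) \<le> L * norm (y - z)"
    and L_pos: "0 < L"
    and xmin_minimizes: "\<And>y. f xmin \<le> f y"
    and \<alpha>_gt: "3 < \<alpha>" and \<gamma>_pos: "0 < \<gamma>" and \<beta>_nonneg: "0 \<le> \<beta>"
    and x_deriv: "\<And>t. t0 \<le> t \<Longrightarrow> (x has_vector_derivative x' t) (at t within {t0..})"
    and x'_deriv: "\<And>t. t0 \<le> t \<Longrightarrow> (x' has_vector_derivative x'' t) (at t within {t0..})"
    and ode: "\<And>t. t0 \<le> t \<Longrightarrow>
       x'' t + (\<alpha> / t) *\<^sub>R x' t + g (x t + beta_fun \<gamma> \<beta> t *\<^sub>R x' t) + e t = 0"
    and e_cont: "continuous_on {t0..} e"
    and e_integrable: "(\<integral>\<^sup>+ t\<in>{t0..}. ennreal (t * norm (e t)) \<partial>lborel) < \<infinity>"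
begin

text \<open>The choice
  \<open>(\<alpha> + 1) / 2\<close> makes the two decay rates \<open>\<theta> - 2\<close> and \<open>\<alpha> - 1 - \<theta>\<close> equal.\<close>
definition \<theta> :: real where
  "\<theta> = (\<alpha> + 1) / 2"

definition z :: "real \<Rightarrow> 'a" where
  "z t = x t + beta_fun \<gamma> \<beta> t *\<^sub>R x' t"

definition gap :: "real \<Rightarrow> real" where
  "gap t = f (z t) - f xmin"

definition u :: "real \<Rightarrow> 'a" where
  "u t = \<theta> *\<^sub>R (x t - xmin) + t *\<^sub>R x' t"

definition energy :: "real \<Rightarrow> real" where
  "energy t = energy_coeff \<alpha> \<gamma> \<beta> \<theta> t * gap t + (norm (u t))\<^sup>2 / 2
     + \<theta> * (\<alpha> - 1 - \<theta>) / 2 * (norm (x t - xmin))\<^sup>2"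

definition dissipation :: "real \<Rightarrow> real" where
  "dissipation t = t * gap t + t\<^sup>2 * (norm (g (z t)))\<^sup>2 + t * (norm (x' t))\<^sup>2"

lemma gap_nonneg: "0 \<le> gap t"
  using xmin_minimizes by (simp add: gap_def)

lemma \<theta>_rates: "\<theta> - 2 = (\<alpha> - 3) / 2" "\<alpha> - 1 - \<theta> = (\<alpha> - 3) / 2"
  by (simp_all add: \<theta>_def field_simps)

lemma \<theta>_gt_2: "2 < \<theta>"
  using \<alpha>_gt by (simp add: \<theta>_def)

lemma x_has_vector_derivative: "t0 < t \<Longrightarrow> (x has_vector_derivative x' t) (at t)"
  and x'_has_vector_derivative: "t0 < t \<Longrightarrow> (x' has_vector_derivative x'' t) (at t)"
  using x_deriv[of t] x'_deriv[of t] at_within_interior[of t "{t0..}"] by auto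

lemma continuous_on_x: "continuous_on {t0..} x"
  and continuous_on_x': "continuous_on {t0..} x'"
  using x_deriv x'_deriv
  by (auto simp: continuous_on_eq_continuous_within intro: has_vector_derivative_continuous)

lemma continuous_on_f: "continuous_on UNIV f"
  using f_grad by (auto intro!: continuous_at_imp_continuous_on has_derivative_continuous)

lemma continuous_on_g: "continuous_on UNIV g"
  using L_pos g_lipschitz
  by (intro lipschitz_on_continuous_on[of L]) (auto intro!: lipschitz_onI simp: dist_norm)

lemma continuous_on_z: "continuous_on {t0..} z"
  unfolding z_def beta_fun_def using t0_pos
  by (auto intro!: continuous_intros continuous_on_x continuous_on_x')

lemma continuous_on_dissipation: "continuous_on {t0..} dissipation"
  unfolding dissipation_def gap_def
  by (intro continuous_intros continuous_on_compose2[OF continuous_on_f continuous_on_z]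
      continuous_on_compose2[OF continuous_on_g continuous_on_z] continuous_on_x') auto

lemma energy_has_derivative:
  assumes "t0 < t" and A': "(energy_coeff \<alpha> \<gamma> \<beta> \<theta> has_real_derivative A') (at t)"
  shows "(energy has_real_derivative
      A' * gap t
      + energy_coeff \<alpha> \<gamma> \<beta> \<theta> t * (g (z t) \<bullet> (x' t + beta_fun \<gamma> \<beta> t *\<^sub>R x'' t - (\<beta> / t\<^sup>2) *\<^sub>R x' t))
      + u t \<bullet> ((\<theta> + 1) *\<^sub>R x' t + t *\<^sub>R x'' t)
      + \<theta> * (\<alpha> - 1 - \<theta>) * ((x t - xmin) \<bullet> x' t)) (at t)"
proof -
  have "0 < t"
    using \<open>t0 < t\<close> t0_pos by simp
  note x = x_has_vector_derivative[OF \<open>t0 < t\<close>] and x' = x'_has_vector_derivative[OF \<open>t0 < t\<close>]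
  have "(beta_fun \<gamma> \<beta> has_real_derivative - \<beta> / t\<^sup>2) (at t)"
    unfolding beta_fun_def[abs_def] using \<open>0 < t\<close>
    by (auto intro!: derivative_eq_intros simp: power2_eq_square)
  from has_vector_derivative_add[OF x has_vector_derivative_scaleR[OF this x']]
  have "(z has_vector_derivative x' t + beta_fun \<gamma> \<beta> t *\<^sub>R x'' t - (\<beta> / t\<^sup>2) *\<^sub>R x' t) (at t)"
    unfolding z_def[abs_def] by (simp add: algebra_simps)
  from gradient_chain_rule[OF f_grad this]
  have gap: "(gap has_real_derivative g (z t) \<bullet> (x' t + beta_fun \<gamma> \<beta> t *\<^sub>R x'' t - (\<beta> / t\<^sup>2) *\<^sub>R x' t)) (at t)"
    unfolding gap_def[abs_def] by (auto intro!: derivative_eq_intros)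
  have y: "((\<lambda>s. x s - xmin) has_vector_derivative x' t) (at t)"
    using has_vector_derivative_diff[OF x has_vector_derivative_const] by simp
  from has_vector_derivative_add[OF has_vector_derivative_scaleR[OF DERIV_const[of \<theta>] y]
      has_vector_derivative_scaleR[OF DERIV_ident x']]
  have "(u has_vector_derivative (\<theta> + 1) *\<^sub>R x' t + t *\<^sub>R x'' t) (at t)"
    unfolding u_def[abs_def] by (simp add: algebra_simps)
  from DERIV_add[OF DERIV_add[OF DERIV_mult[OF A' gap] DERIV_cdivide[OF norm_squared_has_real_derivative[OF this]]]
      DERIV_cmult[OF norm_squared_has_real_derivative[OF y]]]
  show ?thesis
    unfolding energy_def[abs_def] by (rule DERIV_cong) (simp add: field_simps)
qed

lemma energy_derivative_eq:
  assumes "t0 < t"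
    and friction: "energy_coeff \<alpha> \<gamma> \<beta> \<theta> t * (1 - \<alpha> * beta_fun \<gamma> \<beta> t / t - \<beta> / t\<^sup>2)
      = t\<^sup>2 - \<theta> * t * beta_fun \<gamma> \<beta> t"
  shows "A' * gap t
      + energy_coeff \<alpha> \<gamma> \<beta> \<theta> t * (g (z t) \<bullet> (x' t + beta_fun \<gamma> \<beta> t *\<^sub>R x'' t - (\<beta> / t\<^sup>2) *\<^sub>R x' t))
      + u t \<bullet> ((\<theta> + 1) *\<^sub>R x' t + t *\<^sub>R x'' t)
      + \<theta> * (\<alpha> - 1 - \<theta>) * ((x t - xmin) \<bullet> x' t)
    = (A' - \<theta> * t) * gap t
      - energy_coeff \<alpha> \<gamma> \<beta> \<theta> t * beta_fun \<gamma> \<beta> t * (norm (g (z t)))\<^sup>2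
      - t * (\<alpha> - 1 - \<theta>) * (norm (x' t))\<^sup>2
      - \<theta> * t * (g (z t) \<bullet> (z t - xmin) - gap t)
      - energy_coeff \<alpha> \<gamma> \<beta> \<theta> t * beta_fun \<gamma> \<beta> t * (g (z t) \<bullet> e t)
      - t * (u t \<bullet> e t)"
proof -
  define A b G y v w where "A = energy_coeff \<alpha> \<gamma> \<beta> \<theta> t" and "b = beta_fun \<gamma> \<beta> t"
    and "G = g (z t)" and "y = x t - xmin" and "v = x' t" and "w = e t"
  have "0 < t"
    using \<open>t0 < t\<close> t0_pos by simp
  have x'': "x'' t = - ((\<alpha> / t) *\<^sub>R v) - G - w"
    using ode[of t] \<open>t0 < t\<close> unfolding G_def v_def w_def z_def by (simp add: algebra_simps eq_neg_iff_add_eq_0)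
  have "A * (G \<bullet> (v + b *\<^sub>R x'' t - (\<beta> / t\<^sup>2) *\<^sub>R v))
      = A * (1 - \<alpha> * b / t - \<beta> / t\<^sup>2) * (G \<bullet> v) - A * b * (G \<bullet> G) - A * b * (G \<bullet> w)"
    unfolding x'' by (simp add: algebra_simps inner_diff_right inner_add_right)
  also have "\<dots> = (t\<^sup>2 - \<theta> * t * b) * (G \<bullet> v) - A * b * (G \<bullet> G) - A * b * (G \<bullet> w)"
    using friction unfolding A_def b_def by simp
  finally have gradient_term: "A * (G \<bullet> (v + b *\<^sub>R x'' t - (\<beta> / t\<^sup>2) *\<^sub>R v))
      = (t\<^sup>2 - \<theta> * t * b) * (G \<bullet> v) - A * b * (G \<bullet> G) - A * b * (G \<bullet> w)" .
  have anchor_term: "u t \<bullet> ((\<theta> + 1) *\<^sub>R v + t *\<^sub>R x'' t)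
      = \<theta> * (\<theta> + 1 - \<alpha>) * (y \<bullet> v) - \<theta> * t * (G \<bullet> y) - \<theta> * t * (y \<bullet> w)
        + t * (\<theta> + 1 - \<alpha>) * (v \<bullet> v) - t\<^sup>2 * (G \<bullet> v) - t\<^sup>2 * (v \<bullet> w)"
    unfolding x'' u_def y_def[symmetric] v_def[symmetric] using \<open>0 < t\<close>
    by (simp add: algebra_simps inner_diff_right inner_add_left inner_commute power2_eq_square)
  have extrapolation_term: "G \<bullet> (z t - xmin) = G \<bullet> y + b * (G \<bullet> v)"
    unfolding z_def y_def b_def v_def by (simp add: algebra_simps inner_add_right)
  have perturbation_term: "u t \<bullet> w = \<theta> * (y \<bullet> w) + t * (v \<bullet> w)"
    unfolding u_def y_def v_def by (simp add: inner_add_left)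
  txt \<open>The weight \<open>\<theta> (\<alpha> - 1 - \<theta>)\<close> of \<open>\<parallel>x - x\<^sup>*\<parallel>\<^sup>2\<close> in the energy makes the \<open>\<langle>y, v\<rangle>\<close> terms cancel.\<close>
  show ?thesis
    unfolding A_def[symmetric] b_def[symmetric] G_def[symmetric] y_def[symmetric] v_def[symmetric]
      w_def[symmetric] gradient_term anchor_term extrapolation_term perturbation_term power2_norm_eq_inner
    by (simp add: algebra_simps power2_eq_square)
qed

definition \<kappa> :: real where
  "\<kappa> = min ((\<alpha> - 3) / 4) (\<gamma> / 2)"

definition K :: real where
  "K = 2 * (\<gamma> + \<beta>) * sqrt L + sqrt 2"

lemma \<kappa>_pos: "0 < \<kappa>"
  using \<alpha>_gt \<gamma>_pos by (simp add: \<kappa>_def)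

lemma K_nonneg: "0 \<le> K"
  using \<gamma>_pos \<beta>_nonneg L_pos by (simp add: K_def)

lemma energy_lower_bounds:
  assumes "0 \<le> energy_coeff \<alpha> \<gamma> \<beta> \<theta> t"
  shows "energy_coeff \<alpha> \<gamma> \<beta> \<theta> t * gap t \<le> energy t" and "(norm (u t))\<^sup>2 \<le> 2 * energy t"
    and "\<theta> * (\<alpha> - 1 - \<theta>) * (norm (x t - xmin))\<^sup>2 \<le> 2 * energy t" and "0 \<le> energy t"
proof -
  have "0 < \<theta> * (\<alpha> - 1 - \<theta>)"
    using \<theta>_gt_2 \<theta>_rates \<alpha>_gt by simp
  moreover have "0 \<le> energy_coeff \<alpha> \<gamma> \<beta> \<theta> t * gap t"
    using assms gap_nonneg by simp
  ultimately show "energy_coeff \<alpha> \<gamma> \<beta> \<theta> t * gap t \<le> energy t" "(norm (u t))\<^sup>2 \<le> 2 * energy t"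
    "\<theta> * (\<alpha> - 1 - \<theta>) * (norm (x t - xmin))\<^sup>2 \<le> 2 * energy t" "0 \<le> energy t"
    unfolding energy_def by simp_all
qed

lemma gradient_perturbation_le:
  assumes "1 \<le> t" and A_nonneg: "0 \<le> energy_coeff \<alpha> \<gamma> \<beta> \<theta> t"
    and A_upper: "energy_coeff \<alpha> \<gamma> \<beta> \<theta> t \<le> 2 * t\<^sup>2"
  shows "- (energy_coeff \<alpha> \<gamma> \<beta> \<theta> t * beta_fun \<gamma> \<beta> t * (g (z t) \<bullet> w))
    \<le> 2 * (\<gamma> + \<beta>) * sqrt L * t * sqrt (energy t) * norm w"
proof -
  define A b G where "A = energy_coeff \<alpha> \<gamma> \<beta> \<theta> t" and "b = beta_fun \<gamma> \<beta> t" and "G = g (z t)"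
  have b: "0 \<le> b" "b \<le> \<gamma> + \<beta>"
    using beta_fun_bounds[OF \<beta>_nonneg \<open>1 \<le> t\<close>, where \<gamma> = \<gamma>] \<gamma>_pos by (simp_all add: b_def)
  have E: "A * gap t \<le> energy t" "0 \<le> energy t"
    using energy_lower_bounds[OF A_nonneg] by (simp_all add: A_def)
  have scaled_gradient: "A * b * norm G \<le> 2 * (\<gamma> + \<beta>) * sqrt L * t * sqrt (energy t)"
  proof (rule power2_le_imp_le)
    have "(A * b * norm G)\<^sup>2 = (A * b)\<^sup>2 * (norm G)\<^sup>2"
      by (simp add: power_mult_distrib)
    also have "\<dots> \<le> (A * b)\<^sup>2 * (2 * L * gap t)"
      using lipschitz_gradient_norm_bound[OF f_grad g_lipschitz L_pos xmin_minimizes]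
      by (intro mult_left_mono) (auto simp: gap_def G_def)
    also have "\<dots> = (2 * L * b\<^sup>2 * A) * (A * gap t)"
      by (simp add: power2_eq_square algebra_simps)
    also have "\<dots> \<le> (2 * L * (\<gamma> + \<beta>)\<^sup>2 * (2 * t\<^sup>2)) * energy t"
      using E L_pos b A_nonneg A_upper gap_nonneg[of t]
      by (intro mult_mono power_mono) (auto simp: A_def)
    also have "\<dots> = (2 * (\<gamma> + \<beta>) * sqrt L * t * sqrt (energy t))\<^sup>2"
      using E(2) L_pos by (simp add: power_mult_distrib) (simp add: power2_eq_square algebra_simps)
    finally show "(A * b * norm G)\<^sup>2 \<le> (2 * (\<gamma> + \<beta>) * sqrt L * t * sqrt (energy t))\<^sup>2" .
    show "0 \<le> 2 * (\<gamma> + \<beta>) * sqrt L * t * sqrt (energy t)"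
      using \<gamma>_pos \<beta>_nonneg L_pos E(2) \<open>1 \<le> t\<close> by simp
  qed
  have "- (A * b * (G \<bullet> w)) \<le> A * b * norm G * norm w"
    using norm_cauchy_schwarz[of "- G" w] mult_left_mono[of "- G \<bullet> w" "norm G * norm w" "A * b"]
      A_nonneg b by (simp add: A_def mult.assoc)
  also have "\<dots> \<le> 2 * (\<gamma> + \<beta>) * sqrt L * t * sqrt (energy t) * norm w"
    using scaled_gradient by (rule mult_right_mono) simp
  finally show ?thesis
    unfolding A_def b_def G_def .
qed

lemma anchor_perturbation_le:
  assumes "0 \<le> energy_coeff \<alpha> \<gamma> \<beta> \<theta> t" and "0 \<le> t"
  shows "- (t * (u t \<bullet> w)) \<le> sqrt 2 * t * sqrt (energy t) * norm w"
proof -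
  have E: "(norm (u t))\<^sup>2 \<le> 2 * energy t" "0 \<le> energy t"
    using energy_lower_bounds(2,4)[OF assms(1)] by simp_all
  then have "(norm (u t))\<^sup>2 \<le> (sqrt 2 * sqrt (energy t))\<^sup>2"
    by (simp add: power_mult_distrib)
  then have "norm (u t) \<le> sqrt 2 * sqrt (energy t)"
    by (rule power2_le_imp_le) (use E(2) in simp)
  have "- (t * (u t \<bullet> w)) = t * (- u t \<bullet> w)"
    by simp
  also have "\<dots> \<le> t * (norm (u t) * norm w)"
    using norm_cauchy_schwarz[of "- u t" w] \<open>0 \<le> t\<close> by (intro mult_left_mono) auto
  also have "\<dots> \<le> t * (sqrt 2 * sqrt (energy t) * norm w)"
    using \<open>norm (u t) \<le> sqrt 2 * sqrt (energy t)\<close> \<open>0 \<le> t\<close> by (intro mult_left_mono mult_right_mono) auto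
  finally show ?thesis
    by (simp add: mult_ac)
qed

lemma energy_derivative_le:
  assumes "1 \<le> t"
    and A_lower: "t\<^sup>2 / 2 \<le> energy_coeff \<alpha> \<gamma> \<beta> \<theta> t" and A_upper: "energy_coeff \<alpha> \<gamma> \<beta> \<theta> t \<le> 2 * t\<^sup>2"
    and A': "A' \<le> (\<theta> + 2) / 2 * t"
  shows "(A' - \<theta> * t) * gap t
      - energy_coeff \<alpha> \<gamma> \<beta> \<theta> t * beta_fun \<gamma> \<beta> t * (norm (g (z t)))\<^sup>2
      - t * (\<alpha> - 1 - \<theta>) * (norm (x' t))\<^sup>2
      - \<theta> * t * (g (z t) \<bullet> (z t - xmin) - gap t)
      - energy_coeff \<alpha> \<gamma> \<beta> \<theta> t * beta_fun \<gamma> \<beta> t * (g (z t) \<bullet> e t)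
      - t * (u t \<bullet> e t)
      + \<kappa> * dissipation t
    \<le> K * (t * norm (e t)) * sqrt (energy t)"
proof -
  define A b G where "A = energy_coeff \<alpha> \<gamma> \<beta> \<theta> t" and "b = beta_fun \<gamma> \<beta> t" and "G = g (z t)"
  have "0 < t" "0 \<le> A"
    using \<open>1 \<le> t\<close> A_lower zero_le_power2[of t] unfolding A_def by linarith+
  have \<kappa>: "\<kappa> \<le> (\<alpha> - 3) / 4" "\<kappa> \<le> \<gamma> / 2"
    unfolding \<kappa>_def by (fact min.cobounded1 min.cobounded2)+
  have "\<kappa> * t \<le> (\<alpha> - 3) / 4 * t"
    using \<kappa>(1) \<open>0 < t\<close> by (intro mult_right_mono) auto
  then have "A' - \<theta> * t \<le> - (\<kappa> * t)"
    using A' by (simp add: \<theta>_def field_simps)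
  from mult_right_mono[OF this gap_nonneg]
  have gap_decay: "(A' - \<theta> * t) * gap t \<le> - (\<kappa> * t * gap t)"
    by simp
  have gradient_decay: "\<kappa> * t\<^sup>2 * (norm G)\<^sup>2 \<le> A * b * (norm G)\<^sup>2"
  proof (rule mult_right_mono[OF _ zero_le_power2])
    have "\<kappa> * t\<^sup>2 \<le> \<gamma> / 2 * t\<^sup>2"
      by (rule mult_right_mono[OF \<kappa>(2)]) simp
    also have "\<dots> = t\<^sup>2 / 2 * \<gamma>"
      by simp
    also have "\<dots> \<le> A * b"
      using A_lower beta_fun_bounds[OF \<beta>_nonneg \<open>1 \<le> t\<close>, where \<gamma> = \<gamma>] \<gamma>_pos \<open>0 \<le> A\<close>
      unfolding A_def b_def by (intro mult_mono) auto
    finally show "\<kappa> * t\<^sup>2 \<le> A * b" .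
  qed
  have velocity_decay: "\<kappa> * t * (norm (x' t))\<^sup>2 \<le> t * (\<alpha> - 1 - \<theta>) * (norm (x' t))\<^sup>2"
    using \<kappa>(1) \<alpha>_gt \<open>0 < t\<close> \<theta>_rates(2) by (intro mult_right_mono) auto
  have convexity: "gap t \<le> G \<bullet> (z t - xmin)"
    using convex_gradient_inequality[OF f_convex f_grad, of "z t" xmin]
    unfolding gap_def G_def by (simp add: inner_diff_right)
  have "0 \<le> \<theta> * t * (G \<bullet> (z t - xmin) - gap t)"
    using convexity \<theta>_gt_2 \<open>0 < t\<close> by simp
  moreover have "\<kappa> * dissipation t = \<kappa> * t * gap t + \<kappa> * t\<^sup>2 * (norm G)\<^sup>2 + \<kappa> * t * (norm (x' t))\<^sup>2"
    by (simp add: dissipation_def G_def algebra_simps)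
  moreover have "K * (t * norm (e t)) * sqrt (energy t)
      = 2 * (\<gamma> + \<beta>) * sqrt L * t * sqrt (energy t) * norm (e t) + sqrt 2 * t * sqrt (energy t) * norm (e t)"
    by (simp add: K_def algebra_simps)
  ultimately show ?thesis
    using gap_decay gradient_decay velocity_decay
      gradient_perturbation_le[OF \<open>1 \<le> t\<close> \<open>0 \<le> A\<close>[unfolded A_def] A_upper, of "e t"]
      anchor_perturbation_le[OF \<open>0 \<le> A\<close>[unfolded A_def] less_imp_le[OF \<open>0 < t\<close>], of "e t"]
    unfolding A_def[symmetric] b_def[symmetric] G_def[symmetric] by linarith
qed

lemma eventually_energy_dissipation:
  "eventually (\<lambda>t. \<exists>E'. (energy has_real_derivative E') (at t)
     \<and> E' + \<kappa> * dissipation t \<le> K * (t * norm (e t)) * sqrt (energy t)) at_top"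
  using eventually_gt_at_top[of t0] eventually_ge_at_top[of 1]
    eventually_energy_coeff_friction_identity[of \<alpha> \<gamma> \<beta> \<theta>] eventually_energy_coeff_bounds[of \<alpha> \<gamma> \<beta> \<theta>]
    eventually_energy_coeff_derivative_bound[OF \<theta>_gt_2, of \<alpha> \<gamma> \<beta>]
proof eventually_elim
  case (elim t)
  then obtain A' where A': "(energy_coeff \<alpha> \<gamma> \<beta> \<theta> has_real_derivative A') (at t)" "A' \<le> (\<theta> + 2) / 2 * t"
    by blast
  show ?case
    using energy_has_derivative[OF \<open>t0 < t\<close> A'(1)] energy_derivative_eq[OF \<open>t0 < t\<close>, of A']
      energy_derivative_le[OF \<open>1 \<le> t\<close> _ _ A'(2)] elim
    by auto
qed

lemma eventually_energy_lower_bounds: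
  "eventually (\<lambda>t. t\<^sup>2 / 2 * gap t \<le> energy t \<and> (norm (u t))\<^sup>2 \<le> 2 * energy t
     \<and> \<theta> * (\<alpha> - 1 - \<theta>) * (norm (x t - xmin))\<^sup>2 \<le> 2 * energy t \<and> 0 \<le> energy t) at_top"
  using eventually_energy_coeff_bounds[of \<alpha> \<gamma> \<beta> \<theta>]
proof eventually_elim
  case (elim t)
  then have "0 \<le> energy_coeff \<alpha> \<gamma> \<beta> \<theta> t"
    using zero_le_power2[of t] by linarith
  moreover have "t\<^sup>2 / 2 * gap t \<le> energy_coeff \<alpha> \<gamma> \<beta> \<theta> t * gap t"
    using elim gap_nonneg by (intro mult_right_mono) auto
  ultimately show ?case
    using energy_lower_bounds by (auto intro: order_trans)
qed

lemma eventually_energy_and_dissipation_integral_bounded: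
  "eventually (\<lambda>T. \<exists>B. \<forall>t\<ge>T. energy t \<le> B \<and> integral {T..t} dissipation \<le> B) at_top"
proof -
  obtain T0 where T0: "\<And>t. T0 \<le> t \<Longrightarrow> (\<exists>E'. (energy has_real_derivative E') (at t)
      \<and> E' + \<kappa> * dissipation t \<le> K * (t * norm (e t)) * sqrt (energy t)) \<and> 0 \<le> energy t"
    using eventually_conj[OF eventually_energy_dissipation eventually_energy_lower_bounds]
    unfolding eventually_at_top_linorder by blast
  have "\<exists>B. \<forall>t\<ge>T. energy t \<le> B \<and> integral {T..t} dissipation \<le> B" if "max T0 t0 \<le> T" for T
  proof -
    have "0 < t" if "T \<le> t" for t
      using that \<open>max T0 t0 \<le> T\<close> t0_pos by simp
    have "\<exists>B. \<forall>t\<ge>T. energy t \<le> B \<and> integral {T..t} (\<lambda>s. \<kappa> * dissipation s) \<le> B"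
    proof (rule perturbed_dissipative_energy_bounded)
      show "\<And>t. T \<le> t \<Longrightarrow> integral {T..t} (\<lambda>s. s * norm (e s))
          \<le> enn2real (\<integral>\<^sup>+ t\<in>{t0..}. ennreal (t * norm (e t)) \<partial>lborel)"
        using that t0_pos
        by (intro integral_le_nn_integral_Ici e_integrable continuous_intros e_cont) auto
      show "continuous_on {T..} (\<lambda>s. \<kappa> * dissipation s)"
        using that by (intro continuous_intros continuous_on_subset[OF continuous_on_dissipation]) auto
      show "continuous_on {T..} (\<lambda>s. s * norm (e s))"
        using that by (intro continuous_intros continuous_on_subset[OF e_cont]) auto
      show "\<And>t. T \<le> t \<Longrightarrow> 0 \<le> \<kappa> * dissipation t"
        unfolding dissipation_def using \<open>\<And>t. T \<le> t \<Longrightarrow> 0 < t\<close> \<kappa>_pos gap_nonneg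
        by (intro mult_nonneg_nonneg add_nonneg_nonneg) (auto simp: less_imp_le)
      show "\<And>t. T \<le> t \<Longrightarrow> 0 \<le> t * norm (e t)"
        using \<open>\<And>t. T \<le> t \<Longrightarrow> 0 < t\<close> by (simp add: less_imp_le)
    qed (use that T0 K_nonneg in auto)
    then obtain B where B: "\<And>t. T \<le> t \<Longrightarrow> energy t \<le> B \<and> \<kappa> * integral {T..t} dissipation \<le> B"
      by auto
    show ?thesis
    proof (intro exI[of _ "max B (B / \<kappa>)"] allI impI conjI)
      fix t
      assume "T \<le> t"
      show "energy t \<le> max B (B / \<kappa>)"
        using B[OF \<open>T \<le> t\<close>] by (simp add: le_max_iff_disj)
      show "integral {T..t} dissipation \<le> max B (B / \<kappa>)"
        using B[OF \<open>T \<le> t\<close>] \<kappa>_pos by (simp add: le_max_iff_disj pos_le_divide_eq mult.commute)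
    qed
  qed
  then show ?thesis
    unfolding eventually_at_top_linorder by blast
qed

lemma energy_eventually_bounded: "\<exists>B. eventually (\<lambda>t. energy t \<le> B) at_top"
proof -
  obtain T B where "\<And>t. T \<le> t \<Longrightarrow> energy t \<le> B"
    using eventually_energy_and_dissipation_integral_bounded
    unfolding eventually_at_top_linorder by (metis order_refl)
  then show ?thesis
    unfolding eventually_at_top_linorder by blast
qed

lemma gap_bigo: "gap \<in> O[at_top](\<lambda>t. 1 / t\<^sup>2)"
proof -
  obtain B where "eventually (\<lambda>t. energy t \<le> B) at_top"
    using energy_eventually_bounded by blast
  with eventually_energy_lower_bounds eventually_gt_at_top[of 0]
  have "eventually (\<lambda>t. norm (gap t) \<le> 2 * B * norm (1 / t\<^sup>2)) at_top"
  proof eventually_elim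
    case (elim t)
    then have "t\<^sup>2 * gap t \<le> 2 * B"
      by simp
    then show ?case
      using \<open>0 < t\<close> gap_nonneg[of t] by (simp add: field_simps)
  qed
  then show ?thesis
    by (rule bigoI)
qed

lemma velocity_bigo: "(\<lambda>t. norm (x' t)) \<in> O[at_top](\<lambda>t. 1 / t)"
proof -
  define \<xi> where "\<xi> = \<theta> * (\<alpha> - 1 - \<theta>)"
  have "0 < \<xi>"
    using \<theta>_gt_2 \<theta>_rates \<alpha>_gt by (simp add: \<xi>_def)
  obtain B where "eventually (\<lambda>t. energy t \<le> B) at_top"
    using energy_eventually_bounded by blast
  with eventually_energy_lower_bounds eventually_gt_at_top[of 0]
  have "eventually (\<lambda>t. norm (norm (x' t)) \<le> (sqrt (2 * B) + \<theta> * sqrt (2 * B / \<xi>)) * norm (1 / t)) at_top"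
  proof eventually_elim
    case (elim t)
    then have "0 \<le> B"
      by linarith
    have "(norm (u t))\<^sup>2 \<le> (sqrt (2 * B))\<^sup>2"
      using elim by simp
    then have u: "norm (u t) \<le> sqrt (2 * B)"
      by (rule power2_le_imp_le) (use \<open>0 \<le> B\<close> in simp)
    have "(norm (x t - xmin))\<^sup>2 \<le> (sqrt (2 * B / \<xi>))\<^sup>2"
      using elim \<open>0 < \<xi>\<close> by (simp add: \<xi>_def field_simps)
    then have y: "norm (x t - xmin) \<le> sqrt (2 * B / \<xi>)"
      by (rule power2_le_imp_le) (use \<open>0 \<le> B\<close> \<open>0 < \<xi>\<close> in simp)
    have "t * norm (x' t) = norm (u t - \<theta> *\<^sub>R (x t - xmin))"
      using \<open>0 < t\<close> by (simp add: u_def)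
    also have "\<dots> \<le> norm (u t) + \<theta> * norm (x t - xmin)"
      using norm_triangle_ineq4[of "u t" "\<theta> *\<^sub>R (x t - xmin)"] \<theta>_gt_2 by simp
    also have "\<dots> \<le> sqrt (2 * B) + \<theta> * sqrt (2 * B / \<xi>)"
      using u y \<theta>_gt_2 by (intro add_mono mult_left_mono) auto
    finally show ?case
      using \<open>0 < t\<close> by (simp add: field_simps)
  qed
  then show ?thesis
    by (rule bigoI)
qed

lemma nn_integral_finite_if_dominated_by_dissipation:
  assumes q_cont: "continuous_on {t0..} q" and q_nonneg: "\<And>t. t0 \<le> t \<Longrightarrow> 0 \<le> q t"
    and dominated: "eventually (\<lambda>t. q t \<le> C * dissipation t) at_top" and "0 \<le> C"
  shows "(\<integral>\<^sup>+ t\<in>{t0..}. ennreal (q t) \<partial>lborel) < \<infinity>"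
proof -
  obtain T B where "t0 \<le> T" and "\<And>t. T \<le> t \<Longrightarrow> q t \<le> C * dissipation t"
    and "\<And>t. T \<le> t \<Longrightarrow> integral {T..t} dissipation \<le> B"
    using eventually_conj[OF eventually_energy_and_dissipation_integral_bounded
        eventually_conj[OF eventually_all_ge_at_top[OF dominated] eventually_ge_at_top[of t0]]]
    unfolding eventually_at_top_linorder by (metis order_refl)
  then show ?thesis
    by (intro nn_integral_Ici_finite_if_dominated[OF q_cont q_nonneg \<open>t0 \<le> T\<close>
          continuous_on_subset[OF continuous_on_dissipation] _ \<open>0 \<le> C\<close>]) auto
qed

lemma nn_integral_velocity_finite: "(\<integral>\<^sup>+ t\<in>{t0..}. ennreal (t * (norm (x' t))\<^sup>2) \<partial>lborel) < \<infinity>"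
proof (rule nn_integral_finite_if_dominated_by_dissipation[of _ 1])
  show "eventually (\<lambda>t. t * (norm (x' t))\<^sup>2 \<le> 1 * dissipation t) at_top"
    using eventually_ge_at_top[of 0] by eventually_elim (simp add: dissipation_def gap_nonneg)
qed (use t0_pos in \<open>auto intro!: continuous_intros continuous_on_x'\<close>)

lemma nn_integral_gradient_finite:
  "(\<integral>\<^sup>+ t\<in>{t0..}. ennreal (t\<^sup>2 * (norm (g (z t)))\<^sup>2) \<partial>lborel) < \<infinity>"
proof (rule nn_integral_finite_if_dominated_by_dissipation[of _ 1])
  show "eventually (\<lambda>t. t\<^sup>2 * (norm (g (z t)))\<^sup>2 \<le> 1 * dissipation t) at_top"
    using eventually_ge_at_top[of 0] by eventually_elim (simp add: dissipation_def gap_nonneg)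
qed (auto intro!: continuous_intros continuous_on_compose2[OF continuous_on_g continuous_on_z])

lemma value_gap_le_dissipation:
  assumes "1 \<le> t"
  shows "t * (f (x t) - f xmin) \<le> (1 + (\<gamma> + \<beta>) + L * (\<gamma> + \<beta>)\<^sup>2) * dissipation t"
proof -
  define b n m where "b = beta_fun \<gamma> \<beta> t" and "n = norm (g (z t))" and "m = norm (x' t)"
  have b: "0 \<le> b" "b \<le> \<gamma> + \<beta>"
    using beta_fun_bounds[OF \<beta>_nonneg \<open>1 \<le> t\<close>, where \<gamma> = \<gamma>] \<gamma>_pos by (simp_all add: b_def)
  have "0 \<le> n" "0 \<le> m"
    by (simp_all add: n_def m_def)
  have "f (x t) \<le> f (z t) + n * (b * m) + L * (b * m)\<^sup>2"
    using convex_value_le_shifted[OF f_convex f_grad g_lipschitz, of "x t" "b *\<^sub>R x' t"] b(1)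
    by (simp add: z_def b_def n_def m_def)
  then have "f (x t) - f xmin \<le> gap t + b * n * m + L * b\<^sup>2 * m\<^sup>2"
    by (simp add: gap_def power_mult_distrib algebra_simps)
  then have "t * (f (x t) - f xmin) \<le> t * (gap t + b * n * m + L * b\<^sup>2 * m\<^sup>2)"
    using \<open>1 \<le> t\<close> by (intro mult_left_mono) auto
  also have "\<dots> = t * gap t + b * (t * n * m) + L * b\<^sup>2 * (t * m\<^sup>2)"
    by (simp add: algebra_simps)
  also have "\<dots> \<le> t * gap t + (\<gamma> + \<beta>) * (t\<^sup>2 * n\<^sup>2 + t * m\<^sup>2) + L * (\<gamma> + \<beta>)\<^sup>2 * (t * m\<^sup>2)"
  proof -
    have "2 * (t * n) * m \<le> (t * n)\<^sup>2 + m\<^sup>2"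
      using sum_squares_bound[of "t * n" m] by simp
    moreover have "m\<^sup>2 \<le> t * m\<^sup>2"
      using \<open>1 \<le> t\<close> by (simp add: mult_le_cancel_right1)
    moreover have "0 \<le> t * n * m"
      using \<open>1 \<le> t\<close> \<open>0 \<le> n\<close> \<open>0 \<le> m\<close> by simp
    ultimately have "t * n * m \<le> t\<^sup>2 * n\<^sup>2 + t * m\<^sup>2"
      by (simp add: power_mult_distrib)
    then have "b * (t * n * m) \<le> (\<gamma> + \<beta>) * (t\<^sup>2 * n\<^sup>2 + t * m\<^sup>2)"
      using b \<open>0 \<le> t * n * m\<close> by (intro mult_mono) auto
    moreover have "L * b\<^sup>2 * (t * m\<^sup>2) \<le> L * (\<gamma> + \<beta>)\<^sup>2 * (t * m\<^sup>2)"
      using b L_pos \<open>1 \<le> t\<close> by (intro mult_right_mono mult_left_mono power_mono) auto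
    ultimately show ?thesis
      by linarith
  qed
  also have "\<dots> \<le> (1 + (\<gamma> + \<beta>) + L * (\<gamma> + \<beta>)\<^sup>2) * (t * gap t + t\<^sup>2 * n\<^sup>2 + t * m\<^sup>2)"
  proof -
    have "0 \<le> t * gap t" "0 \<le> t\<^sup>2 * n\<^sup>2" "0 \<le> t * m\<^sup>2" "0 \<le> \<gamma> + \<beta>" "0 \<le> L * (\<gamma> + \<beta>)\<^sup>2"
      using \<open>1 \<le> t\<close> gap_nonneg[of t] \<gamma>_pos \<beta>_nonneg L_pos by simp_all
    then have "0 \<le> (\<gamma> + \<beta>) * (t * gap t)" "0 \<le> L * (\<gamma> + \<beta>)\<^sup>2 * (t * gap t + t\<^sup>2 * n\<^sup>2)"
      by simp_all
    then show ?thesis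
      using \<open>0 \<le> t\<^sup>2 * n\<^sup>2\<close> \<open>0 \<le> t * m\<^sup>2\<close> by (simp add: algebra_simps)
  qed
  finally show ?thesis
    by (simp add: dissipation_def n_def m_def)
qed

lemma nn_integral_value_gap_finite:
  "(\<integral>\<^sup>+ t\<in>{t0..}. ennreal (t * (f (x t) - f xmin)) \<partial>lborel) < \<infinity>"
proof (rule nn_integral_finite_if_dominated_by_dissipation)
  show "eventually (\<lambda>t. t * (f (x t) - f xmin) \<le> (1 + (\<gamma> + \<beta>) + L * (\<gamma> + \<beta>)\<^sup>2) * dissipation t) at_top"
    using eventually_ge_at_top[of 1] by eventually_elim (rule value_gap_le_dissipation)
  show "0 \<le> 1 + (\<gamma> + \<beta>) + L * (\<gamma> + \<beta>)\<^sup>2"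
    using \<gamma>_pos \<beta>_nonneg L_pos by simp
qed (use t0_pos xmin_minimizes in
      \<open>auto intro!: continuous_intros continuous_on_compose2[OF continuous_on_f continuous_on_x]\<close>)

end

theorem theorem7:
  fixes f :: "'a :: {real_inner, complete_space} \<Rightarrow> real"
    and g :: "'a \<Rightarrow> 'a"
    and x x' x'' e :: "real \<Rightarrow> 'a"
    and t0 L \<alpha> \<gamma> \<beta> b :: real
  assumes t0_pos: "t0 > 0"
    and f_convex: "convex_on UNIV f"
    and f_grad: "\<And>y. (f has_derivative (\<lambda>h. g y \<bullet> h)) (at y)"
    and g_lipschitz: "\<And>y z. norm (g y - g z) \<le> L * norm (y - z)"
    and f_argmin_nonempty: "\<exists>z. \<forall>y. f z \<le> f y"
    and \<alpha>_gt: "\<alpha> > 3" and \<gamma>_pos: "\<gamma> > 0" and \<beta>_nonneg: "\<beta> \<ge> 0"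
    and b_pos: "0 < b" and b_le: "b \<le> \<alpha> - 1"
    and e_cont: "continuous_on {t0..} e"
    and e_L1: "(\<integral>\<^sup>+ t\<in>{t0..}. ennreal (m_fun L \<alpha> \<gamma> \<beta> b t * norm (e t)) \<partial>lborel) < \<infinity>"
    and x_deriv: "\<And>t. t \<ge> t0 \<Longrightarrow> (x has_vector_derivative x' t) (at t within {t0..})"
    and x'_deriv: "\<And>t. t \<ge> t0 \<Longrightarrow> (x' has_vector_derivative x'' t) (at t within {t0..})"
    and ode: "\<And>t. t \<ge> t0 \<Longrightarrow>
       x'' t + (\<alpha> / t) *\<^sub>R x' t + g (x t + beta_fun \<gamma> \<beta> t *\<^sub>R x' t) + e t = 0"
  shows "((\<lambda>t. f (x t + beta_fun \<gamma> \<beta> t *\<^sub>R x' t) - (INF y. f y)) \<in> O[at_top](\<lambda>t. 1 / t^2)) \<and>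
     ((\<lambda>t. norm (x' t)) \<in> O[at_top](\<lambda>t. 1 / t)) \<and>
     ((\<integral>\<^sup>+ t\<in>{t0..}. ennreal (t * (f (x t) - (INF y. f y))) \<partial>lborel) < \<infinity>) \<and>
     ((\<integral>\<^sup>+ t\<in>{t0..}. ennreal (t^2 * (norm (g (x t + beta_fun \<gamma> \<beta> t *\<^sub>R x' t)))^2) \<partial>lborel) < \<infinity>) \<and>
     ((\<integral>\<^sup>+ t\<in>{t0..}. ennreal (t * (norm (x' t))^2) \<partial>lborel) < \<infinity>)"
proof -
  obtain xmin where xmin: "\<And>y. f xmin \<le> f y"
    using f_argmin_nonempty by blast
  have min_eq: "(INF y. f y) = f xmin"
    by (rule antisym[OF cINF_lower cINF_greatest]) (auto intro: xmin simp: bdd_below_def)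
  interpret perturbed_inertial_dynamics f g "max L 1" x x' x'' e t0 \<alpha> \<gamma> \<beta> xmin
  proof
    show "norm (g y - g z) \<le> max L 1 * norm (y - z)" for y z
      using g_lipschitz[of y z] by (rule order_trans) (simp add: mult_right_mono)
    have "(\<integral>\<^sup>+ t\<in>{t0..}. ennreal (t * norm (e t)) \<partial>lborel)
        \<le> (\<integral>\<^sup>+ t\<in>{t0..}. ennreal (m_fun L \<alpha> \<gamma> \<beta> b t * norm (e t)) \<partial>lborel)"
      by (intro nn_integral_mono) (auto split: split_indicator intro!: ennreal_leI mult_right_mono simp: m_fun_def)
    then show "(\<integral>\<^sup>+ t\<in>{t0..}. ennreal (t * norm (e t)) \<partial>lborel) < \<infinity>"
      using e_L1 by (rule le_less_trans)
  qed (use assms xmin in auto)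
  have "gap = (\<lambda>t. f (x t + beta_fun \<gamma> \<beta> t *\<^sub>R x' t) - (INF y. f y))"
    by (simp add: fun_eq_iff gap_def z_def min_eq)
  then show ?thesis
    using gap_bigo velocity_bigo nn_integral_value_gap_finite nn_integral_gradient_finite
      nn_integral_velocity_finite
    by (simp add: min_eq z_def)
qed

end
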